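(* Let $(g_i)_{i \geq 1}$ be i.i.d. centered normal random variables, and for each $d \geq 1$ let $\boldsymbol{w}^{(d)} = (g_1,\dots,g_d)/\|(g_1,\dots,g_d)\|_2$, so that $\boldsymbol{w}^{(d)}$ is uniformly distributed on the unit $\ell_2$-sphere of $\mathbb{R}^d$. For every $p \in (1,\infty]$, with $p' \in [1,\infty)$ defined by $\frac1p + \frac1{p'} = 1$, as $d \to \infty$, \[ \frac{d^{1/p}\,\frac{\|\boldsymbol{w}^{(d)}\|_{p'}}{\|\boldsymbol{w}^{(d)}\|_2}}{\sqrt{d}} \longrightarrow \sqrt{2}\left(\frac{\Gamma\left(\frac{2p-1}{2(p-1)}\right)}{\sqrt{\pi}}\right)^{1-\frac{1}{p}} \quad \text{almost surely} \] (for $p = \infty$ the right-hand side is read as $\sqrt{2}\,\Gamma(1)/\sqrt{\pi}$). Moreover, for $p = 1$, \[ \frac{d\,\frac{\|\boldsymbol{w}^{(d)}\|_{\infty}}{\|\boldsymbol{w}^{(d)}\|_2}}{\sqrt{2 d \ln d}} \longrightarrow 1 \quad \text{almost surely}. \]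
   Context: $\Gamma$ is the Gamma function; $\|\cdot\|_q$ is the $\ell_q$ norm on $\mathbb{R}^d$. *)

theory Defs
  imports "HOL-Probability.Probability"
begin

definition lq_norm :: "real \<Rightarrow> nat \<Rightarrow> (nat \<Rightarrow> real) \<Rightarrow> real" where
  "lq_norm q d x = (\<Sum>i=1..d. \<bar>x i\<bar> powr q) powr (1 / q)"

definition linf_norm :: "nat \<Rightarrow> (nat \<Rightarrow> real) \<Rightarrow> real" where
  "linf_norm d x = Max ((\<lambda>i. \<bar>x i\<bar>) ` {1..d})"

definition unit_dir :: "nat \<Rightarrow> (nat \<Rightarrow> real) \<Rightarrow> (nat \<Rightarrow> real)" where
  "unit_dir d x = (\<lambda>i. x i / lq_norm 2 d x)"

end

theory Submission
  imports Defs "HOL-Real_Asymp.Real_Asymp"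
begin

text \<open>Normalising a vector does not change the ratio of two of its norms, so with
  \<open>S\<^sub>q(d) = \<Sum>\<^sub>i\<^sub>\<le>\<^sub>d \<bar>g\<^sub>i\<bar>\<^sup>q\<close> the ratio \<open>\<parallel>w\<parallel>\<^sub>q / \<parallel>w\<parallel>\<^sub>2\<close> is \<open>S\<^sub>q(d)\<^sup>1\<^sup>/\<^sup>q / S\<^sub>2(d)\<^sup>1\<^sup>/\<^sup>2\<close>.
  A strong law of large numbers for independent nonnegative square-integrable variables
  (Chebyshev and Borel--Cantelli along the perfect squares, then monotone interpolation)
  gives \<open>S\<^sub>q(d) / d \<longrightarrow> E\<bar>g\<bar>\<^sup>q = \<sigma>\<^sup>q 2\<^sup>q\<^sup>/\<^sup>2 \<Gamma>((q+1)/2) / \<surd>\<pi>\<close> almost surely, which yields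
  the first two limits with \<open>q = p'\<close> and \<open>q = 1\<close>. For the sup norm, the Gaussian tail bounds
  \<open>P(\<bar>g\<bar> \<ge> t) \<le> 2 exp(-t\<^sup>2/2\<sigma>\<^sup>2)\<close> and \<open>P(\<bar>g\<bar> \<ge> t) \<ge> \<sigma> \<phi>(t + \<sigma>)\<close> together with
  Borel--Cantelli show \<open>max\<^sub>i\<^sub>\<le>\<^sub>d \<bar>g\<^sub>i\<bar> \<sim> \<sigma> \<surd>(2 ln d)\<close>, while \<open>S\<^sub>2(d)\<^sup>1\<^sup>/\<^sup>2 \<sim> \<sigma> \<surd>d\<close>.\<close>

section \<open>Absolute moments of the normal distribution\<close>

lemma set_integral_Gamma_real:
  assumes "a > 0"
  shows "set_integrable lborel {0<..} (\<lambda>t::real. t powr (a - 1) / exp t)"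
    and "(LBINT t:{0<..}. t powr (a - 1) / exp t) = Gamma a"
proof -
  have "(\<lambda>t. ennreal (indicator {0..} t * t powr (a - 1) / exp t)) =
        (\<lambda>t. ennreal (indicator {0<..} t * (t powr (a - 1) / exp t)))"
    by (auto simp: indicator_def fun_eq_iff)
  then have "has_bochner_integral lborel (\<lambda>t. indicator {0<..} t * (t powr (a - 1) / exp t)) (Gamma a)"
    using Gamma_conv_nn_integral_real[OF assms] Gamma_real_pos[OF assms]
    by (intro has_bochner_integral_nn_integral) (auto simp: indicator_def)
  then show "set_integrable lborel {0<..} (\<lambda>t::real. t powr (a - 1) / exp t)"
    and "(LBINT t:{0<..}. t powr (a - 1) / exp t) = Gamma a"
    unfolding set_integrable_def set_lebesgue_integral_def by (auto simp: has_bochner_integral_iff)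
qed

lemma set_integral_substitution_sqrt:
  fixes f :: "real \<Rightarrow> real" and s :: real
  assumes s: "s > 0" and cont: "continuous_on {0<..} f" and nonneg: "\<And>x. x > 0 \<Longrightarrow> 0 \<le> f x"
    and int: "set_integrable lborel {0<..} (\<lambda>t. f (s * sqrt (2 * t)) * (s / sqrt (2 * t)))"
  shows "set_integrable lborel {0<..} f"
    and "(LBINT x:{0<..}. f x) = (LBINT t:{0<..}. f (s * sqrt (2 * t)) * (s / sqrt (2 * t)))"
proof -
  define G where "G = (\<lambda>t::real. s * sqrt (2 * t))"
  define G' where "G' = (\<lambda>t::real. s / sqrt (2 * t))"
  have einterval: "einterval 0 \<infinity> = {0::real<..}"
    by (auto simp: einterval_def zero_ereal_def)
  have deriv: "DERIV G x :> G' x" if "0 < x" for x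
    unfolding G_def G'_def using that
    by (auto intro!: derivative_eq_intros simp: field_simps real_sqrt_mult)
  have cont_f: "isCont f (G x)" if "0 < x" for x
  proof (rule continuous_on_interior[OF cont])
    show "G x \<in> interior {0<..}"
      using s that by (simp add: G_def interior_open)
  qed
  have cont_G': "isCont G' x" if "0 < x" for x
    unfolding G'_def using that by (auto intro!: continuous_intros)
  have G_at_0: "((ereal \<circ> G \<circ> real_of_ereal) \<longlongrightarrow> 0) (at_right 0)"
  proof -
    have "(G \<longlongrightarrow> G 0) (at_right 0)"
      unfolding G_def by (intro tendsto_intros continuous_on_tendsto_compose) auto
    then show ?thesis unfolding zero_ereal_def
      by (simp add: ereal_tendsto_simps1 ereal_tendsto_simps2 o_assoc[symmetric] G_def)
  qed
  have G_at_top: "((ereal \<circ> G \<circ> real_of_ereal) \<longlongrightarrow> \<infinity>) (at_left \<infinity>)"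
  proof -
    have "filterlim G at_top at_top"
      unfolding G_def using s by real_asymp
    then have "((ereal \<circ> G) \<longlongrightarrow> \<infinity>) at_top"
      by (simp add: ereal_tendsto_simps2)
    then show ?thesis
      by (simp add: at_left_PInf filterlim_filtermap o_def)
  qed
  have nonneg': "\<And>x. 0 < ereal x \<Longrightarrow> 0 \<le> f (G x)" "\<And>x. 0 \<le> ereal x \<Longrightarrow> 0 \<le> G' x"
    using s nonneg by (auto simp: G_def G'_def)
  note subst = interval_integral_substitution_nonneg[of 0 \<infinity> G G' f 0 \<infinity>,
      OF _ deriv cont_f cont_G' nonneg' G_at_0 G_at_top]
  have int': "set_integrable lborel (einterval 0 \<infinity>) (\<lambda>x. f (G x) * G' x)"
    using int by (simp add: einterval G_def G'_def)
  show "set_integrable lborel {0<..} f"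
    using subst(1)[OF _ _ _ _ _ _ int'] by (simp add: einterval zero_ereal_def)
  show "(LBINT x:{0<..}. f x) = (LBINT t:{0<..}. f (s * sqrt (2 * t)) * (s / sqrt (2 * t)))"
    using subst(2)[OF _ _ _ _ _ _ int']
    by (simp add: einterval zero_ereal_def interval_lebesgue_integral_def G_def G'_def)
qed

lemma set_integral_powr_times_gaussian:
  fixes s q :: real
  assumes s: "s > 0" and q: "q > 0"
  shows "set_integrable lborel {0<..} (\<lambda>x::real. x powr q * exp (- (x\<^sup>2) / (2 * s\<^sup>2)))"
    and "(LBINT x:{0<..}. x powr q * exp (- (x\<^sup>2) / (2 * s\<^sup>2))) =
           s powr (q + 1) * 2 powr ((q - 1) / 2) * Gamma ((q + 1) / 2)"
proof -
  define f where "f = (\<lambda>x::real. x powr q * exp (- (x\<^sup>2) / (2 * s\<^sup>2)))"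
  define C where "C = s powr (q + 1) * 2 powr ((q - 1) / 2)"
  have substituted: "f (s * sqrt (2 * t)) * (s / sqrt (2 * t)) = C * (t powr ((q + 1) / 2 - 1) / exp t)"
    if t: "t > 0" for t
  proof -
    have rearrange: "a * b * (1 / e) * (s / c) = (a * s) * (b / c) / e"
      and regroup: "x * (y * z) / e = x * y * (z / e)" for a b c e x y z :: real
      by (simp_all add: divide_inverse ac_simps)
    have exp_part: "exp (- ((s * sqrt (2 * t))\<^sup>2) / (2 * s\<^sup>2)) = 1 / exp t"
      using s t by (simp add: power_mult_distrib exp_minus inverse_eq_divide)
    have powr_part: "(s * sqrt (2 * t)) powr q = s powr q * (2 * t) powr (q / 2)"
      using s t by (simp add: powr_mult powr_half_sqrt[symmetric] powr_powr)
    have sqrt_part: "s / sqrt (2 * t) = s / (2 * t) powr (1 / 2)"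
      using t by (simp add: powr_half_sqrt)
    have "f (s * sqrt (2 * t)) * (s / sqrt (2 * t)) =
          (s powr q * s) * ((2 * t) powr (q / 2) / (2 * t) powr (1 / 2)) / exp t"
      unfolding f_def exp_part powr_part sqrt_part by (rule rearrange)
    also have "(2 * t) powr (q / 2) / (2 * t) powr (1 / 2) = (2 * t) powr ((q - 1) / 2)"
      by (simp add: powr_diff[symmetric] diff_divide_distrib)
    also have "\<dots> = 2 powr ((q - 1) / 2) * t powr ((q + 1) / 2 - 1)"
      using t by (simp add: powr_mult field_simps)
    also have "s powr q * s = s powr (q + 1)"
      using s by (simp add: powr_add)
    finally show ?thesis
      unfolding C_def regroup .
  qed
  have "(q + 1) / 2 > 0"
    using q by simp
  note Gamma = set_integral_Gamma_real[OF this]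
  have "set_integrable lborel {0<..} (\<lambda>t. C * (t powr ((q + 1) / 2 - 1) / exp t))"
    using Gamma(1) by (rule set_integrable_mult_right)
  then have int: "set_integrable lborel {0<..} (\<lambda>t. f (s * sqrt (2 * t)) * (s / sqrt (2 * t)))"
    by (subst set_integrable_cong[OF refl refl substituted]) auto
  have cont: "continuous_on {0<..} f"
    unfolding f_def using s by (intro continuous_intros) auto
  note subst = set_integral_substitution_sqrt[OF s cont _ int]
  show "set_integrable lborel {0<..} (\<lambda>x::real. x powr q * exp (- (x\<^sup>2) / (2 * s\<^sup>2)))"
    using subst(1) by (simp add: f_def)
  have "(LBINT t:{0<..}. f (s * sqrt (2 * t)) * (s / sqrt (2 * t))) =
        (LBINT t:{0<..}. C * (t powr ((q + 1) / 2 - 1) / exp t))"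
    by (rule set_lebesgue_integral_cong) (simp, metis greaterThan_iff substituted)
  also have "\<dots> = C * Gamma ((q + 1) / 2)"
    by (simp only: set_integral_mult_right Gamma(2))
  finally show "(LBINT x:{0<..}. x powr q * exp (- (x\<^sup>2) / (2 * s\<^sup>2))) =
           s powr (q + 1) * 2 powr ((q - 1) / 2) * Gamma ((q + 1) / 2)"
    using subst(2) by (simp add: f_def C_def)
qed

definition normal_abs_moment :: "real \<Rightarrow> real \<Rightarrow> real" where
  "normal_abs_moment \<sigma> q = \<sigma> powr q * 2 powr (q / 2) * Gamma ((q + 1) / 2) / sqrt pi"

lemma normal_abs_moment_pos: "\<sigma> > 0 \<Longrightarrow> q > 0 \<Longrightarrow> normal_abs_moment \<sigma> q > 0"
  unfolding normal_abs_moment_def by (intro divide_pos_pos mult_pos_pos Gamma_real_pos) auto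

lemma normal_abs_moment_two:
  assumes "\<sigma> > 0"
  shows "normal_abs_moment \<sigma> 2 = \<sigma>\<^sup>2"
proof -
  have "(1/2::real) \<notin> \<int>\<^sub>\<le>\<^sub>0"
    by (auto dest: nonpos_Ints_nonpos)
  then have Gamma_3_2: "Gamma (3 / 2 :: real) = sqrt pi / 2"
    using Gamma_plus1[of "1/2 :: real"] by (simp add: Gamma_one_half_real)
  show ?thesis
    using assms by (simp add: normal_abs_moment_def powr_numeral Gamma_3_2)
qed

lemma normal_abs_moment_root:
  assumes "\<sigma> > 0" "q > 0"
  shows "normal_abs_moment \<sigma> q powr (1 / q) / \<sigma> = sqrt 2 * (Gamma ((q + 1) / 2) / sqrt pi) powr (1 / q)"
proof -
  define G where "G = Gamma ((q + 1) / 2) / sqrt pi"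
  have "G > 0"
    unfolding G_def using assms by (intro divide_pos_pos Gamma_real_pos) auto
  then have "normal_abs_moment \<sigma> q powr (1 / q) = (\<sigma> powr q) powr (1 / q) * (2 powr (q / 2)) powr (1 / q) * G powr (1 / q)"
    unfolding normal_abs_moment_def G_def[symmetric] times_divide_eq_right[symmetric] by (simp add: powr_mult)
  also have "\<dots> = \<sigma> * sqrt 2 * G powr (1 / q)"
    using assms by (simp add: powr_powr powr_half_sqrt)
  finally show ?thesis
    using assms by (simp add: G_def)
qed

lemma has_bochner_integral_normal_abs_powr:
  assumes s: "\<sigma> > 0" and q: "q > 0"
  shows "has_bochner_integral lborel (\<lambda>x. normal_density 0 \<sigma> x * \<bar>x\<bar> powr q) (normal_abs_moment \<sigma> q)"
proof -
  define h where "h = (\<lambda>x::real. indicator {0<..} x * (x powr q * exp (- (x\<^sup>2) / (2 * \<sigma>\<^sup>2))))"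
  define K where "K = \<sigma> powr (q + 1) * 2 powr ((q - 1) / 2) * Gamma ((q + 1) / 2)"
  note half_line = set_integral_powr_times_gaussian[OF s q]
  have h: "has_bochner_integral lborel h K"
    using half_line unfolding set_integrable_def set_lebesgue_integral_def h_def K_def
    by (simp add: has_bochner_integral_iff)
  have h_reflected: "has_bochner_integral lborel (\<lambda>x. h (- x)) K"
    using h lborel_integrable_real_affine[of h "-1" 0] lborel_integral_real_affine[of "-1" h 0]
    by (simp add: has_bochner_integral_iff)
  \<comment> \<open>the density is even, so the integral is twice the one over the positive half-line\<close>
  have split: "normal_density 0 \<sigma> x * \<bar>x\<bar> powr q = (h x + h (- x)) / sqrt (2 * pi * \<sigma>\<^sup>2)" for x
    using q by (cases x "0::real" rule: linorder_cases)
      (simp_all add: h_def normal_density_def indicator_def)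
  have "has_bochner_integral lborel (\<lambda>x. normal_density 0 \<sigma> x * \<bar>x\<bar> powr q)
      ((K + K) / sqrt (2 * pi * \<sigma>\<^sup>2))"
    unfolding split by (intro has_bochner_integral_divide_zero has_bochner_integral_add h h_reflected)
  also have "(K + K) / sqrt (2 * pi * \<sigma>\<^sup>2) = normal_abs_moment \<sigma> q"
  proof -
    have "sqrt (2 * pi * \<sigma>\<^sup>2) = 2 powr (1/2) * sqrt pi * \<sigma>"
      using s by (simp add: real_sqrt_mult powr_half_sqrt)
    moreover have "\<sigma> powr (q + 1) = \<sigma> powr q * \<sigma>"
      using s by (simp add: powr_add)
    moreover have "2 * 2 powr ((q - 1) / 2) = 2 powr (1/2) * (2::real) powr (q / 2)"
      by (simp add: powr_add[symmetric] powr_mult_base field_simps)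
    ultimately show ?thesis
      using s unfolding K_def normal_abs_moment_def by (simp add: field_simps)
  qed
  finally show ?thesis .
qed

lemma tendsto_of_eventually_dist_le_inverse_Suc:
  assumes "\<And>j. eventually (\<lambda>n. dist (f n) l \<le> 1 / real (Suc j)) F"
  shows "(f \<longlongrightarrow> l) F"
proof (rule tendstoI)
  fix e :: real assume "e > 0"
  then obtain j where "1 / real (Suc j) < e"
    using reals_Archimedean by (auto simp: inverse_eq_divide)
  with assms[of j] show "eventually (\<lambda>n. dist (f n) l < e) F"
    by (auto elim: eventually_mono)
qed

lemma floor_sqrt_bounds:
  assumes "1 \<le> m"
  defines "j \<equiv> nat \<lfloor>sqrt (real m)\<rfloor>"
  shows "1 \<le> j" "j\<^sup>2 \<le> m" "m < (Suc j)\<^sup>2"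
proof -
  have floor_ge_1: "1 \<le> \<lfloor>sqrt (real m)\<rfloor>"
    using assms by simp
  then show "1 \<le> j"
    unfolding j_def by arith
  have j: "real j \<le> sqrt (real m)" "sqrt (real m) < real j + 1"
    using floor_ge_1 unfolding j_def by linarith+
  have "(real j)\<^sup>2 \<le> (sqrt (real m))\<^sup>2"
    using j by (intro power_mono) auto
  then show "j\<^sup>2 \<le> m"
    by (simp flip: of_nat_power)
  have "(sqrt (real m))\<^sup>2 < (real j + 1)\<^sup>2"
    using j by (intro power_strict_mono) auto
  then have "real m < real ((Suc j)\<^sup>2)"
    by (simp add: add.commute)
  then show "m < (Suc j)\<^sup>2"
    by (simp only: of_nat_less_iff)
qed

text \<open>Consecutive squares have ratio tending to \<open>1\<close>, so monotonicity interpolates the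
  averages between them.\<close>
lemma averages_tendsto_of_mono_squares:
  fixes S :: "nat \<Rightarrow> real"
  assumes mono: "mono S" and nonneg: "\<And>m. 0 \<le> S m"
    and lim: "(\<lambda>k. S ((Suc k)\<^sup>2) / real ((Suc k)\<^sup>2)) \<longlonglongrightarrow> \<mu>"
  shows "(\<lambda>m. S m / real m) \<longlonglongrightarrow> \<mu>"
proof -
  define N where "N = (\<lambda>k::nat. (Suc k)\<^sup>2)"
  define b where "b = (\<lambda>k. S (N k) / real (N k))"
  define lower where "lower = (\<lambda>k. b k * (real (N k) / real (N (Suc k))))"
  define upper where "upper = (\<lambda>k. b (Suc k) * (real (N (Suc k)) / real (N k)))"
  define r where "r = (\<lambda>m::nat. nat \<lfloor>sqrt (real m)\<rfloor> - 1)"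
  have b: "b \<longlonglongrightarrow> \<mu>"
    using lim unfolding b_def N_def .
  have "(\<lambda>k. real (N k) / real (N (Suc k))) \<longlonglongrightarrow> 1"
    "(\<lambda>k. real (N (Suc k)) / real (N k)) \<longlonglongrightarrow> 1"
    unfolding N_def by real_asymp+
  then have "lower \<longlonglongrightarrow> \<mu>" "upper \<longlonglongrightarrow> \<mu>"
    unfolding lower_def upper_def using tendsto_mult[OF b] tendsto_mult[OF LIMSEQ_Suc[OF b]] by force+
  moreover have "filterlim r sequentially sequentially"
    unfolding r_def by real_asymp
  ultimately have lim_lower: "(\<lambda>m. lower (r m)) \<longlonglongrightarrow> \<mu>" and lim_upper: "(\<lambda>m. upper (r m)) \<longlonglongrightarrow> \<mu>"
    by (auto intro: filterlim_compose)
  have "lower (r m) \<le> S m / real m \<and> S m / real m \<le> upper (r m)" if m: "1 \<le> m" for m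
  proof -
    define j where "j = nat \<lfloor>sqrt (real m)\<rfloor>"
    have j: "1 \<le> j" "j\<^sup>2 \<le> m" "m < (Suc j)\<^sup>2"
      using floor_sqrt_bounds[OF m] unfolding j_def by auto
    have N: "N (r m) = j\<^sup>2" "N (Suc (r m)) = (Suc j)\<^sup>2"
      using j by (simp_all add: N_def r_def j_def[symmetric])
    have pos: "0 < real (j\<^sup>2)" "0 < real ((Suc j)\<^sup>2)" "0 < real m"
      using j m by auto
    have m_le: "real m \<le> real ((Suc j)\<^sup>2)"
      using j(3) by (simp only: of_nat_le_iff less_imp_le)
    have "lower (r m) = S (j\<^sup>2) / real ((Suc j)\<^sup>2)"
      unfolding lower_def b_def N using pos by (simp add: field_simps)
    also have "\<dots> \<le> S m / real ((Suc j)\<^sup>2)"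
      using monoD[OF mono j(2)] pos by (simp add: divide_right_mono)
    also have "\<dots> \<le> S m / real m"
      using m_le pos nonneg[of m] by (intro divide_left_mono) auto
    finally have "lower (r m) \<le> S m / real m" .
    have "S m / real m \<le> S ((Suc j)\<^sup>2) / real m"
      using monoD[OF mono, of m "(Suc j)\<^sup>2"] j(3) pos by (simp add: divide_right_mono)
    also have "\<dots> \<le> S ((Suc j)\<^sup>2) / real (j\<^sup>2)"
      using j(2) pos nonneg[of "(Suc j)\<^sup>2"] by (intro divide_left_mono) auto
    also have "\<dots> = upper (r m)"
      unfolding upper_def b_def N using pos by (simp add: field_simps)
    finally show ?thesis
      using \<open>lower (r m) \<le> S m / real m\<close> by simp
  qed
  then have "eventually (\<lambda>m. lower (r m) \<le> S m / real m \<and> S m / real m \<le> upper (r m)) sequentially"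
    by (rule eventually_mono[OF eventually_ge_at_top[of 1]])
  then show ?thesis
    by (intro tendsto_sandwich[OF _ _ lim_lower lim_upper]) (auto elim: eventually_mono)
qed

lemma eventually_Max_le_of_eventually_le:
  fixes x a :: "nat \<Rightarrow> real"
  assumes le: "eventually (\<lambda>d. x d \<le> c * a d) sequentially" and c: "1 \<le> c"
    and a: "mono a" "filterlim a at_top sequentially"
  shows "eventually (\<lambda>d. Max (x ` {1..d}) \<le> c * a d) sequentially"
proof -
  obtain N where N: "\<And>d. N \<le> d \<Longrightarrow> x d \<le> c * a d"
    using le unfolding eventually_sequentially by blast
  define C where "C = Max (x ` {..N})"
  have "eventually (\<lambda>d. max C 0 \<le> a d \<and> 1 \<le> d) sequentially"
    using a(2)[unfolded filterlim_at_top, rule_format, of "max C 0"] eventually_ge_at_top[of 1]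
    by (rule eventually_conj)
  then show ?thesis
  proof eventually_elim
    case (elim d)
    have "x i \<le> c * a d" if "i \<in> {1..d}" for i
    proof (cases "N \<le> i")
      case True
      then have "x i \<le> c * a i" by (rule N)
      also have "\<dots> \<le> c * a d"
        using that c monoD[OF a(1), of i d] by (intro mult_left_mono) auto
      finally show ?thesis .
    next
      case False
      then have "x i \<le> C"
        unfolding C_def by (intro Max_ge) auto
      also have "\<dots> \<le> a d"
        using elim by simp
      also have "\<dots> \<le> c * a d"
        using elim c by (simp add: mult_le_cancel_right1)
      finally show ?thesis .
    qed
    then show ?case
      using elim by (subst Max_le_iff) auto
  qed
qed

section \<open>A strong law of large numbers\<close>

context prob_space
begin

lemma AE_eventually_not_of_summable_prob:
  assumes "\<And>n. {x \<in> space M. P n x} \<in> events"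
    and "summable (\<lambda>n. prob {x \<in> space M. P n x})"
  shows "AE x in M. eventually (\<lambda>n. \<not> P n x) sequentially"
proof -
  have "AE x in M. eventually (\<lambda>n. x \<in> space M - {x \<in> space M. P n x}) sequentially"
    using assms by (intro borel_cantelli_AE1) (auto simp: less_top[symmetric])
  then show ?thesis
    by (rule AE_mp) (auto intro!: AE_I2 elim: eventually_mono)
qed

lemma integral_square_sum_indep_centered:
  fixes Z :: "nat \<Rightarrow> 'a \<Rightarrow> real"
  assumes ind: "indep_vars (\<lambda>_. borel) Z {1..}"
    and square: "\<And>i. 1 \<le> i \<Longrightarrow> integrable M (\<lambda>x. (Z i x)\<^sup>2)"
    and centered: "\<And>i. 1 \<le> i \<Longrightarrow> expectation (Z i) = 0"
    and moment: "\<And>i. 1 \<le> i \<Longrightarrow> expectation (\<lambda>x. (Z i x)\<^sup>2) = v"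
  shows "integrable M (\<lambda>x. (\<Sum>i=1..n. Z i x)\<^sup>2) \<and> expectation (\<lambda>x. (\<Sum>i=1..n. Z i x)\<^sup>2) = real n * v"
proof (induction n)
  case 0
  then show ?case by simp
next
  case (Suc n)
  have integrable: "integrable M (Z i)" if "1 \<le> i" for i
  proof (rule square_integrable_imp_integrable[OF _ square[OF that]])
    show "random_variable borel (Z i)"
      using ind that unfolding indep_vars_def by auto
  qed
  have sum_integrable: "integrable M (\<lambda>x. \<Sum>i=1..n. Z i x)"
    using integrable by (intro Bochner_Integration.integrable_sum) auto
  have sum_centered: "expectation (\<lambda>x. \<Sum>i=1..n. Z i x) = 0"
    using integrable centered by (subst Bochner_Integration.integral_sum) auto
  have indep: "indep_var borel (Z (Suc n)) borel (\<lambda>x. \<Sum>i\<in>{1..n}. Z i x)"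
    by (rule indep_vars_sum) (auto intro: indep_vars_subset[OF ind])
  have cross_integrable: "integrable M (\<lambda>x. Z (Suc n) x * (\<Sum>i=1..n. Z i x))"
    by (rule indep_var_integrable[OF indep integrable sum_integrable]) simp
  have cross_centered: "expectation (\<lambda>x. Z (Suc n) x * (\<Sum>i=1..n. Z i x)) = 0"
    using indep_var_lebesgue_integral[OF indep integrable sum_integrable] sum_centered by simp
  have "(\<lambda>x. (\<Sum>i=1..Suc n. Z i x)\<^sup>2) =
      (\<lambda>x. (\<Sum>i=1..n. Z i x)\<^sup>2 + 2 * (Z (Suc n) x * (\<Sum>i=1..n. Z i x)) + (Z (Suc n) x)\<^sup>2)"
    by (rule ext) (simp add: power2_sum mult_ac)
  then show ?case
    using Suc.IH cross_integrable cross_centered square[of "Suc n"] moment[of "Suc n"]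
    by (simp add: Bochner_Integration.integral_add algebra_simps)
qed

text \<open>Chebyshev and Borel--Cantelli along the sparse subsequence of perfect squares,
  where the tail bounds \<open>v / (k\<^sup>2 \<epsilon>\<^sup>2)\<close> are summable.\<close>
lemma AE_centered_sums_along_squares:
  fixes Z :: "nat \<Rightarrow> 'a \<Rightarrow> real"
  assumes ind: "indep_vars (\<lambda>_. borel) Z {1..}"
    and square: "\<And>i. 1 \<le> i \<Longrightarrow> integrable M (\<lambda>x. (Z i x)\<^sup>2)"
    and centered: "\<And>i. 1 \<le> i \<Longrightarrow> expectation (Z i) = 0"
    and moment: "\<And>i. 1 \<le> i \<Longrightarrow> expectation (\<lambda>x. (Z i x)\<^sup>2) = v"
  shows "AE x in M. (\<lambda>k. (\<Sum>i=1..(Suc k)\<^sup>2. Z i x) / real ((Suc k)\<^sup>2)) \<longlonglongrightarrow> 0"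
proof -
  define T where "T = (\<lambda>n x. \<Sum>i=1..n. Z i x)"
  have measurable_Z: "Z i \<in> borel_measurable M" if "1 \<le> i" for i
    using ind that unfolding indep_vars_def by auto
  have measurable_T[measurable]: "T n \<in> borel_measurable M" for n
    unfolding T_def using measurable_Z by (intro borel_measurable_sum) auto
  have integrable: "integrable M (Z i)" if "1 \<le> i" for i
    by (rule square_integrable_imp_integrable[OF measurable_Z[OF that] square[OF that]])
  have centered_T: "expectation (T n) = 0" for n
    unfolding T_def using integrable centered by (subst Bochner_Integration.integral_sum) auto
  have Chebyshev: "prob {x \<in> space M. real n * e \<le> \<bar>T n x\<bar>} \<le> v / (real n * e\<^sup>2)"
    if "1 \<le> n" "0 < e" for n e
  proof -
    note moment_T = integral_square_sum_indep_centered[OF ind square centered moment, of n]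
    have "prob {x \<in> space M. real n * e \<le> \<bar>T n x - expectation (T n)\<bar>} \<le> variance (T n) / (real n * e)\<^sup>2"
      using that moment_T measurable_T[of n] by (intro Chebyshev_inequality) (auto simp: T_def)
    moreover have "variance (T n) = real n * v"
      using moment_T centered_T[of n] by (simp add: T_def)
    ultimately show ?thesis
      using that centered_T[of n] by (simp add: power2_eq_square field_simps)
  qed
  have "AE x in M. eventually (\<lambda>k. \<not> real ((Suc k)\<^sup>2) * (1 / real (Suc j)) \<le> \<bar>T ((Suc k)\<^sup>2) x\<bar>) sequentially"
    for j
  proof (rule AE_eventually_not_of_summable_prob)
    have bound: "prob {x \<in> space M. real ((Suc k)\<^sup>2) * (1 / real (Suc j)) \<le> \<bar>T ((Suc k)\<^sup>2) x\<bar>} \<le>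
        v * (real (Suc j))\<^sup>2 * inverse ((real (Suc k))\<^sup>2)" for k
      using Chebyshev[of "(Suc k)\<^sup>2" "1 / real (Suc j)"] by (simp add: field_simps)
    have summable_bound: "summable (\<lambda>k. v * (real (Suc j))\<^sup>2 * inverse ((real (Suc k))\<^sup>2))"
      using inverse_power_summable[of 2, where 'a=real] by (intro summable_mult) (subst summable_Suc_iff, simp)
    show "summable (\<lambda>k. prob {x \<in> space M. real ((Suc k)\<^sup>2) * (1 / real (Suc j)) \<le> \<bar>T ((Suc k)\<^sup>2) x\<bar>})"
      by (rule summable_comparison_test'[OF summable_bound, of 0]) (use bound in auto)
  qed measurable
  then have "AE x in M. \<forall>j. eventually (\<lambda>k. \<bar>T ((Suc k)\<^sup>2) x\<bar> < real ((Suc k)\<^sup>2) * (1 / real (Suc j))) sequentially"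
    by (simp add: AE_all_countable not_le)
  then show ?thesis
  proof (rule AE_mp[OF _ AE_I2[OF impI]])
    fix x
    assume small: "\<forall>j. eventually (\<lambda>k. \<bar>T ((Suc k)\<^sup>2) x\<bar> < real ((Suc k)\<^sup>2) * (1 / real (Suc j))) sequentially"
    show "(\<lambda>k. (\<Sum>i=1..(Suc k)\<^sup>2. Z i x) / real ((Suc k)\<^sup>2)) \<longlonglongrightarrow> 0"
    proof (rule tendsto_of_eventually_dist_le_inverse_Suc)
      fix j
      show "eventually (\<lambda>k. dist ((\<Sum>i=1..(Suc k)\<^sup>2. Z i x) / real ((Suc k)\<^sup>2)) 0 \<le> 1 / real (Suc j)) sequentially"
        using small[rule_format, of j] by eventually_elim (auto simp: T_def dist_real_def abs_divide field_simps)
    qed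
  qed
qed

lemma strong_law_nonneg:
  fixes Y :: "nat \<Rightarrow> 'a \<Rightarrow> real"
  assumes ind: "indep_vars (\<lambda>_. borel) Y {1..}"
    and nonneg: "\<And>i x. 1 \<le> i \<Longrightarrow> 0 \<le> Y i x"
    and square: "\<And>i. 1 \<le> i \<Longrightarrow> integrable M (\<lambda>x. (Y i x)\<^sup>2)"
    and mean: "\<And>i. 1 \<le> i \<Longrightarrow> expectation (Y i) = \<mu>"
    and moment: "\<And>i. 1 \<le> i \<Longrightarrow> expectation (\<lambda>x. (Y i x)\<^sup>2) = s2"
  shows "AE x in M. (\<lambda>n. (\<Sum>i=1..n. Y i x) / real n) \<longlonglongrightarrow> \<mu>"
proof -
  define Z where "Z = (\<lambda>i x. Y i x - \<mu>)"
  have measurable_Y: "Y i \<in> borel_measurable M" if "1 \<le> i" for i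
    using ind that unfolding indep_vars_def by auto
  have integrable: "integrable M (Y i)" if "1 \<le> i" for i
    by (rule square_integrable_imp_integrable[OF measurable_Y[OF that] square[OF that]])
  have expand: "(\<lambda>x. (Z i x)\<^sup>2) = (\<lambda>x. ((Y i x)\<^sup>2 - 2 * \<mu> * Y i x) + \<mu>\<^sup>2)" for i
    by (simp add: Z_def power2_diff fun_eq_iff)
  have "AE x in M. (\<lambda>k. (\<Sum>i=1..(Suc k)\<^sup>2. Z i x) / real ((Suc k)\<^sup>2)) \<longlonglongrightarrow> 0"
  proof (rule AE_centered_sums_along_squares)
    show "indep_vars (\<lambda>_. borel) Z {1..}"
      unfolding Z_def by (rule indep_vars_compose2[OF ind]) simp
    show "integrable M (\<lambda>x. (Z i x)\<^sup>2)" if "1 \<le> i" for i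
      unfolding expand using square[OF that] integrable[OF that] by simp
    show "expectation (Z i) = 0" if "1 \<le> i" for i
      unfolding Z_def using integrable[OF that] mean[OF that] prob_space by simp
    show "expectation (\<lambda>x. (Z i x)\<^sup>2) = s2 - \<mu>\<^sup>2" if "1 \<le> i" for i
      unfolding expand using square[OF that] integrable[OF that] mean[OF that] moment[OF that] prob_space
      by (simp add: Bochner_Integration.integral_add Bochner_Integration.integral_diff power2_eq_square)
  qed
  then show ?thesis
  proof (rule AE_mp[OF _ AE_I2[OF impI]])
    fix x
    define S where "S = (\<lambda>n. \<Sum>i=1..n. Y i x)"
    have S: "S n / real n = (\<Sum>i=1..n. Z i x) / real n + \<mu>" if "n \<ge> 1" for n
      using that by (simp add: S_def Z_def sum_subtractf field_simps)
    assume "(\<lambda>k. (\<Sum>i=1..(Suc k)\<^sup>2. Z i x) / real ((Suc k)\<^sup>2)) \<longlonglongrightarrow> 0"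
    then have "(\<lambda>k. (\<Sum>i=1..(Suc k)\<^sup>2. Z i x) / real ((Suc k)\<^sup>2) + \<mu>) \<longlonglongrightarrow> 0 + \<mu>"
      by (intro tendsto_add tendsto_const)
    then have "(\<lambda>k. S ((Suc k)\<^sup>2) / real ((Suc k)\<^sup>2)) \<longlonglongrightarrow> \<mu>"
      using S[of "(Suc _)\<^sup>2"] by simp
    moreover have "mono S"
      unfolding S_def using nonneg by (intro monoI sum_mono2) auto
    moreover have "0 \<le> S m" for m
      unfolding S_def using nonneg by (intro sum_nonneg) auto
    ultimately have "(\<lambda>n. S n / real n) \<longlonglongrightarrow> \<mu>"
      using averages_tendsto_of_mono_squares by blast
    then show "(\<lambda>n. (\<Sum>i=1..n. Y i x) / real n) \<longlonglongrightarrow> \<mu>"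
      by (simp add: S_def)
  qed
qed

end

section \<open>Gaussian tails and maxima\<close>

lemma normal_density_mult_exp:
  assumes "\<sigma> > 0"
  shows "normal_density 0 \<sigma> x * exp (l * x) = exp (l\<^sup>2 * \<sigma>\<^sup>2 / 2) * normal_density (l * \<sigma>\<^sup>2) \<sigma> x"
proof -
  have "- (x\<^sup>2) / (2 * \<sigma>\<^sup>2) + l * x = l\<^sup>2 * \<sigma>\<^sup>2 / 2 + (- (x - l * \<sigma>\<^sup>2)\<^sup>2 / (2 * \<sigma>\<^sup>2))"
    using assms by (simp add: field_simps power2_eq_square)
  then show ?thesis
    unfolding normal_density_def by (simp add: mult_ac flip: exp_add)
qed

lemma has_bochner_integral_normal_exp:
  assumes "\<sigma> > 0"
  shows "has_bochner_integral lborel (\<lambda>x. normal_density 0 \<sigma> x * exp (l * x)) (exp (l\<^sup>2 * \<sigma>\<^sup>2 / 2))"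
  unfolding normal_density_mult_exp[OF assms] using assms by (simp add: has_bochner_integral_iff)

lemma indicator_abs_ge_le_exp:
  fixes l t x :: real
  assumes "0 \<le> l"
  shows "indicator {y. t \<le> \<bar>y\<bar>} x \<le> exp (l * (x - t)) + exp (l * (- x - t))"
proof (cases "t \<le> \<bar>x\<bar>")
  case True
  then have "1 \<le> exp (l * (x - t)) \<or> 1 \<le> exp (l * (- x - t))"
    using assms by (cases "x \<ge> 0") auto
  then show ?thesis
    using True by (auto simp: add_increasing add_increasing2)
qed (simp add: add_nonneg_nonneg)

context prob_space
begin

lemma distributed_normal_abs_powr:
  assumes D: "distributed M lborel X (normal_density 0 \<sigma>)" and "\<sigma> > 0" "q > 0"
  shows "integrable M (\<lambda>x. \<bar>X x\<bar> powr q)" "expectation (\<lambda>x. \<bar>X x\<bar> powr q) = normal_abs_moment \<sigma> q"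
  using has_bochner_integral_normal_abs_powr[OF assms(2,3)]
    distributed_integrable[OF D, of "\<lambda>y. \<bar>y\<bar> powr q"] distributed_integral[OF D, of "\<lambda>y. \<bar>y\<bar> powr q"]
  by (auto simp: has_bochner_integral_iff)

lemma prob_distributed_normal:
  assumes D: "distributed M lborel X (normal_density 0 \<sigma>)" and A: "A \<in> sets borel"
  shows "prob {x \<in> space M. X x \<in> A} = (\<integral>y. normal_density 0 \<sigma> y * indicator A y \<partial>lborel)"
proof -
  have [measurable]: "X \<in> borel_measurable M"
    using distributed_measurable[OF D] by simp
  have "(\<integral>y. normal_density 0 \<sigma> y * indicator A y \<partial>lborel) = (\<integral>x. indicator A (X x) \<partial>M)"
    by (rule distributed_integral[OF D]) (use A in auto)
  also have "\<dots> = (\<integral>x. indicator {x \<in> space M. X x \<in> A} x \<partial>M)"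
    by (intro Bochner_Integration.integral_cong) (auto simp: indicator_def)
  finally show ?thesis
    using A by simp
qed

lemma prob_abs_normal_ge_le:
  assumes D: "distributed M lborel X (normal_density 0 \<sigma>)" and \<sigma>: "\<sigma> > 0" and t: "t \<ge> 0"
  shows "prob {x \<in> space M. t \<le> \<bar>X x\<bar>} \<le> 2 * exp (- (t\<^sup>2) / (2 * \<sigma>\<^sup>2))"
proof -
  \<comment> \<open>Chernoff bound with the optimal exponent \<open>l\<close>\<close>
  define l where "l = t / \<sigma>\<^sup>2"
  have l: "l \<ge> 0"
    using t \<sigma> by (simp add: l_def)
  define F where "F = (\<lambda>x. exp (- l * t) * (normal_density 0 \<sigma> x * exp (l * x)) +
      exp (- l * t) * (normal_density 0 \<sigma> x * exp ((- l) * x)))"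
  have F: "has_bochner_integral lborel F (exp (- l * t) * exp (l\<^sup>2 * \<sigma>\<^sup>2 / 2) + exp (- l * t) * exp ((- l)\<^sup>2 * \<sigma>\<^sup>2 / 2))"
    unfolding F_def using \<sigma> by (intro has_bochner_integral_add has_bochner_integral_mult_right has_bochner_integral_normal_exp)
  have "prob {x \<in> space M. t \<le> \<bar>X x\<bar>} = (\<integral>y. normal_density 0 \<sigma> y * indicator {y. t \<le> \<bar>y\<bar>} y \<partial>lborel)"
    using prob_distributed_normal[OF D, of "{y. t \<le> \<bar>y\<bar>}"] by simp
  also have "\<dots> \<le> integral\<^sup>L lborel F"
  proof (rule integral_mono')
    show "integrable lborel F"
      using F by (simp add: has_bochner_integral_iff)
    fix x :: real
    show "0 \<le> F x"
      unfolding F_def by (intro add_nonneg_nonneg mult_nonneg_nonneg) auto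
    have "normal_density 0 \<sigma> x * indicator {y. t \<le> \<bar>y\<bar>} x \<le>
          normal_density 0 \<sigma> x * (exp (l * (x - t)) + exp (l * (- x - t)))"
      using indicator_abs_ge_le_exp[OF l] by (intro mult_left_mono) auto
    also have "\<dots> = F x"
      unfolding F_def by (simp add: algebra_simps flip: exp_add)
    finally show "normal_density 0 \<sigma> x * indicator {y. t \<le> \<bar>y\<bar>} x \<le> F x" .
  qed
  also have "\<dots> = exp (- l * t) * exp (l\<^sup>2 * \<sigma>\<^sup>2 / 2) + exp (- l * t) * exp ((- l)\<^sup>2 * \<sigma>\<^sup>2 / 2)"
    by (rule has_bochner_integral_integral_eq[OF F])
  also have "\<dots> = 2 * exp (- l * t + l\<^sup>2 * \<sigma>\<^sup>2 / 2)"
    by (simp only: exp_add power2_minus mult_2)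
  also have "- l * t + l\<^sup>2 * \<sigma>\<^sup>2 / 2 = - (t\<^sup>2) / (2 * \<sigma>\<^sup>2)"
    using \<sigma> by (simp add: l_def field_simps power2_eq_square)
  finally show ?thesis .
qed

lemma prob_abs_normal_ge_ge:
  assumes D: "distributed M lborel X (normal_density 0 \<sigma>)" and \<sigma>: "\<sigma> > 0" and t: "t \<ge> 0"
  shows "\<sigma> * normal_density 0 \<sigma> (t + \<sigma>) \<le> prob {x \<in> space M. t \<le> \<bar>X x\<bar>}"
proof -
  define c where "c = normal_density 0 \<sigma> (t + \<sigma>)"
  \<comment> \<open>the density is at least \<open>c\<close> on \<open>[t, t + \<sigma>]\<close>\<close>
  have "\<sigma> * c = (\<integral>x. c * indicator {t..t+\<sigma>} x \<partial>lborel)"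
    using \<sigma> by simp
  also have "\<dots> \<le> (\<integral>x. normal_density 0 \<sigma> x * indicator {y. t \<le> \<bar>y\<bar>} x \<partial>lborel)"
  proof (rule integral_mono)
    show "integrable lborel (\<lambda>x. c * indicator {t..t+\<sigma>} x)"
      using \<sigma> by (intro integrable_mult_right integrable_real_indicator) (auto simp: emeasure_lborel_Icc)
    show "integrable lborel (\<lambda>x. normal_density 0 \<sigma> x * indicator {y. t \<le> \<bar>y\<bar>} x)"
      by (rule Bochner_Integration.integrable_bound[OF integrable_normal_density])
        (use \<sigma> in \<open>auto simp: indicator_def\<close>)
    fix x :: real
    show "c * indicator {t..t+\<sigma>} x \<le> normal_density 0 \<sigma> x * indicator {y. t \<le> \<bar>y\<bar>} x"
    proof (cases "x \<in> {t..t+\<sigma>}")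
      case True
      then have "x\<^sup>2 \<le> (t + \<sigma>)\<^sup>2"
        using t by (intro power_mono) auto
      then have "c \<le> normal_density 0 \<sigma> x"
        unfolding c_def normal_density_def using \<sigma> by (auto simp: divide_right_mono)
      then show ?thesis
        using True t by (auto simp: indicator_def)
    qed (auto simp: indicator_def)
  qed
  also have "\<dots> = prob {x \<in> space M. t \<le> \<bar>X x\<bar>}"
    using prob_distributed_normal[OF D, of "{y. t \<le> \<bar>y\<bar>}"] by simp
  finally show ?thesis
    unfolding c_def .
qed

lemma prob_all_abs_less_le_exp:
  fixes X :: "nat \<Rightarrow> 'a \<Rightarrow> real"
  assumes ind: "indep_vars (\<lambda>_. borel) X {1..}" and d: "1 \<le> d"
    and tail: "\<And>i. 1 \<le> i \<Longrightarrow> c \<le> prob {x \<in> space M. b \<le> \<bar>X i x\<bar>}"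
  shows "prob (\<Inter>i\<in>{1..d}. X i -` {y. \<bar>y\<bar> < b} \<inter> space M) \<le> exp (- (real d * c))"
proof -
  have "prob (\<Inter>i\<in>{1..d}. X i -` {y. \<bar>y\<bar> < b} \<inter> space M) = (\<Prod>i\<in>{1..d}. prob (X i -` {y. \<bar>y\<bar> < b} \<inter> space M))"
    using d by (intro indep_varsD[OF ind]) auto
  also have "\<dots> \<le> (\<Prod>i\<in>{1..d}. exp (- c))"
  proof (rule prod_mono)
    fix i assume "i \<in> {1..d}"
    then have i: "1 \<le> i" by simp
    have [measurable]: "X i \<in> borel_measurable M"
      using ind i unfolding indep_vars_def by auto
    have "X i -` {y. \<bar>y\<bar> < b} \<inter> space M = space M - {x \<in> space M. b \<le> \<bar>X i x\<bar>}"
      by auto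
    then have "prob (X i -` {y. \<bar>y\<bar> < b} \<inter> space M) = 1 - prob {x \<in> space M. b \<le> \<bar>X i x\<bar>}"
      by (simp add: prob_compl)
    also have "\<dots> \<le> exp (- c)"
      using tail[OF i] exp_ge_add_one_self[of "- c"] by simp
    finally show "0 \<le> prob (X i -` {y. \<bar>y\<bar> < b} \<inter> space M) \<and> prob (X i -` {y. \<bar>y\<bar> < b} \<inter> space M) \<le> exp (- c)"
      by simp
  qed
  also have "\<dots> = exp (- (real d * c))"
    by (simp add: exp_of_nat_mult[symmetric])
  finally show ?thesis .
qed

lemma AE_eventually_abs_normal_less:
  assumes \<sigma>: "\<sigma> > 0" and e: "e > 0"
    and D: "\<And>i. i \<ge> 1 \<Longrightarrow> distributed M lborel (g i) (normal_density 0 \<sigma>)"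
  shows "AE x in M. eventually (\<lambda>d. \<bar>g d x\<bar> < (1 + e) * (\<sigma> * sqrt (2 * ln (real d)))) sequentially"
proof -
  define t where "t = (\<lambda>d::nat. (1 + e) * (\<sigma> * sqrt (2 * ln (real d))))"
  have bound: "prob {x \<in> space M. 2 \<le> d \<and> t d \<le> \<bar>g d x\<bar>} \<le> 2 * real d powr (- ((1 + e)\<^sup>2))" for d
  proof (cases "2 \<le> d")
    case True
    have "prob {x \<in> space M. 2 \<le> d \<and> t d \<le> \<bar>g d x\<bar>} \<le> 2 * exp (- ((t d)\<^sup>2) / (2 * \<sigma>\<^sup>2))"
      using prob_abs_normal_ge_le[OF D \<sigma>, of d "t d"] True e \<sigma> by (simp add: t_def)
    also have "- ((t d)\<^sup>2) / (2 * \<sigma>\<^sup>2) = - ((1 + e)\<^sup>2) * ln (real d)"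
      using True \<sigma> by (simp add: t_def power_mult_distrib divide_simps)
    finally show ?thesis
      using True by (simp add: powr_def)
  qed simp
  have "summable (\<lambda>d. 2 * real d powr (- ((1 + e)\<^sup>2)))"
    using e by (intro summable_mult) (simp add: summable_real_powr_iff power2_eq_square algebra_simps add_pos_pos)
  then have "summable (\<lambda>d. prob {x \<in> space M. 2 \<le> d \<and> t d \<le> \<bar>g d x\<bar>})"
    by (rule summable_comparison_test'[of _ 0]) (use bound in auto)
  then have "AE x in M. eventually (\<lambda>d. \<not> (2 \<le> d \<and> t d \<le> \<bar>g d x\<bar>)) sequentially"
  proof (rule AE_eventually_not_of_summable_prob[rotated])
    show "{x \<in> space M. 2 \<le> d \<and> t d \<le> \<bar>g d x\<bar>} \<in> events" for d
    proof (cases "2 \<le> d")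
      case True
      then have [measurable]: "g d \<in> borel_measurable M"
        using distributed_measurable[OF D, of d] by simp
      show ?thesis
        by measurable
    qed simp
  qed
  then show ?thesis
  proof (rule AE_mp[OF _ AE_I2[OF impI]])
    fix x
    assume "eventually (\<lambda>d. \<not> (2 \<le> d \<and> t d \<le> \<bar>g d x\<bar>)) sequentially"
    then show "eventually (\<lambda>d. \<bar>g d x\<bar> < (1 + e) * (\<sigma> * sqrt (2 * ln (real d)))) sequentially"
      using eventually_ge_at_top[of 2] by eventually_elim (auto simp: t_def)
  qed
qed

end

text \<open>The right-hand side is \<open>d\<close> times the lower tail bound \<open>\<sigma> \<phi>(b + \<sigma>)\<close> at
  \<open>b = (1 - e) \<sigma> \<surd>(2 ln d)\<close>, so all of \<open>d\<close> samples stay below \<open>b\<close> with probability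
  at most \<open>exp(-2 ln d) = d\<^sup>-\<^sup>2\<close>.\<close>
lemma eventually_two_ln_le_gaussian_lower:
  fixes e :: real assumes e: "0 < e" "e < 1"
  shows "eventually (\<lambda>d. 2 * ln (real d) \<le>
     real d * (exp (- (((1 - e) * sqrt (2 * ln (real d)) + 1)\<^sup>2) / 2) / sqrt (2 * pi))) sequentially"
proof -
  define \<delta> where "\<delta> = 1 - (1 - e)\<^sup>2"
  have \<delta>: "0 < \<delta>"
    using e by (simp add: \<delta>_def power2_eq_square algebra_simps)
  have "((\<lambda>L::real. (sqrt (2 * L) + 3 + ln (2 * L)) / L) \<longlongrightarrow> 0) at_top"
    by real_asymp
  then have "eventually (\<lambda>L::real. (sqrt (2 * L) + 3 + ln (2 * L)) / L < \<delta> \<and> 0 < L) at_top"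
    by (intro eventually_conj order_tendstoD(2)[OF _ \<delta>] eventually_gt_at_top)
  moreover have "filterlim (\<lambda>d. ln (real d)) at_top sequentially"
    by real_asymp
  ultimately have "eventually (\<lambda>d. (sqrt (2 * ln (real d)) + 3 + ln (2 * ln (real d))) / ln (real d) < \<delta>
      \<and> 0 < ln (real d)) sequentially"
    by (rule eventually_compose_filterlim)
  then show ?thesis
  proof eventually_elim
    case (elim d)
    define L where "L = ln (real d)"
    define u where "u = (1 - e) * sqrt (2 * L)"
    have L: "0 < L" "sqrt (2 * L) + 3 + ln (2 * L) < \<delta> * L"
      using elim by (auto simp: L_def pos_divide_less_eq)
    have d: "real d = exp L"
      using L(1) unfolding L_def by (cases "d = 0") auto
    have u_le: "u \<le> sqrt (2 * L)"
      unfolding u_def using e L by (intro mult_left_le_one_le) auto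
    have square: "(u + 1)\<^sup>2 / 2 = (1 - e)\<^sup>2 * L + u + 1/2"
    proof -
      have "u\<^sup>2 = (1 - e)\<^sup>2 * (2 * L)"
        using L by (simp add: u_def power_mult_distrib)
      then show ?thesis
        by (simp add: power2_sum)
    qed
    have ln_sqrt_2pi: "ln (sqrt (2 * pi)) \<le> 2"
    proof -
      have "sqrt (2 * pi) \<le> 3"
        by (rule real_le_lsqrt) (use pi_less_4 in auto)
      then show ?thesis
        using ln_le_minus_one[of "sqrt (2 * pi)"] by simp
    qed
    have "\<delta> * L = L - (1 - e)\<^sup>2 * L"
      by (simp add: \<delta>_def algebra_simps)
    then have "ln (2 * L) \<le> L - (u + 1)\<^sup>2 / 2 - ln (sqrt (2 * pi))"
      using L(2) u_le square ln_sqrt_2pi by linarith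
    then have "exp (ln (2 * L)) \<le> exp (L - (u + 1)\<^sup>2 / 2 - ln (sqrt (2 * pi)))"
      by (subst exp_le_cancel_iff)
    then have "2 * L \<le> exp (L - (u + 1)\<^sup>2 / 2 - ln (sqrt (2 * pi)))"
      using L(1) by simp
    also have "\<dots> = real d * (exp (- ((u + 1)\<^sup>2) / 2) / sqrt (2 * pi))"
    proof -
      have "exp (ln (sqrt (2 * pi))) = sqrt (2 * pi)"
        by simp
      moreover have "exp (- ((u + 1)\<^sup>2) / 2) = inverse (exp ((u + 1)\<^sup>2 / 2))"
        by (simp only: divide_minus_left exp_minus)
      ultimately show ?thesis
        unfolding d exp_diff by (simp only: divide_inverse mult.assoc)
    qed
    finally show ?case
      unfolding L_def u_def .
  qed
qed

section \<open>Norm ratios of normalised Gaussian vectors\<close>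

lemma lq_norm_divide:
  assumes "c > 0" "q > 0"
  shows "lq_norm q d (\<lambda>i. x i / c) = lq_norm q d x / c"
proof -
  have "(\<Sum>i=1..d. \<bar>x i / c\<bar> powr q) = (\<Sum>i=1..d. \<bar>x i\<bar> powr q) / c powr q"
    using assms by (simp add: abs_divide powr_divide sum_divide_distrib)
  moreover have "(c powr q) powr (1 / q) = c"
    using assms by (simp add: powr_powr)
  ultimately show ?thesis
    unfolding lq_norm_def by (simp add: powr_divide)
qed

lemma linf_norm_divide:
  assumes "c > 0" "1 \<le> d"
  shows "linf_norm d (\<lambda>i. x i / c) = linf_norm d x / c"
proof -
  have image: "(\<lambda>i. \<bar>x i / c\<bar>) ` {1..d} = (\<lambda>y. y / c) ` ((\<lambda>i. \<bar>x i\<bar>) ` {1..d})"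
    using assms by (auto simp: abs_divide image_image)
  have "mono (\<lambda>y::real. y / c)"
    using assms by (auto intro!: monoI divide_right_mono)
  then have "Max ((\<lambda>y. y / c) ` ((\<lambda>i. \<bar>x i\<bar>) ` {1..d})) = Max ((\<lambda>i. \<bar>x i\<bar>) ` {1..d}) / c"
    using assms by (intro mono_Max_commute[symmetric]) auto
  then show ?thesis
    unfolding linf_norm_def image .
qed

lemma lq_norm_ratio_unit_dir:
  assumes "lq_norm 2 d x > 0" "q > 0"
  shows "lq_norm q d (unit_dir d x) / lq_norm 2 d (unit_dir d x) = lq_norm q d x / lq_norm 2 d x"
  using assms by (simp add: unit_dir_def lq_norm_divide)

lemma linf_norm_ratio_unit_dir:
  assumes "lq_norm 2 d x > 0" "1 \<le> d"
  shows "linf_norm d (unit_dir d x) / lq_norm 2 d (unit_dir d x) = linf_norm d x / lq_norm 2 d x"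
  using assms by (simp add: unit_dir_def lq_norm_divide linf_norm_divide)

locale centered_normal_sequence = prob_space +
  fixes g :: "nat \<Rightarrow> 'a \<Rightarrow> real" and \<sigma> :: real
  assumes sigma_pos: "\<sigma> > 0"
    and indep: "indep_vars (\<lambda>_. borel) g {1..}"
    and normal: "\<And>i. 1 \<le> i \<Longrightarrow> distributed M lborel (g i) (normal_density 0 \<sigma>)"
begin

lemma AE_averages_abs_powr:
  assumes q: "q > 0"
  shows "AE x in M. (\<lambda>n. (\<Sum>i=1..n. \<bar>g i x\<bar> powr q) / real n) \<longlonglongrightarrow> normal_abs_moment \<sigma> q"
proof (rule strong_law_nonneg)
  show "indep_vars (\<lambda>_. borel) (\<lambda>i x. \<bar>g i x\<bar> powr q) {1..}"
    by (rule indep_vars_compose2[OF indep]) measurable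
  have square: "(\<lambda>x. (\<bar>g i x\<bar> powr q)\<^sup>2) = (\<lambda>x. \<bar>g i x\<bar> powr (2 * q))" for i
    by (simp add: power2_eq_square powr_add[symmetric])
  note moments = distributed_normal_abs_powr[OF normal sigma_pos]
  show "integrable M (\<lambda>x. (\<bar>g i x\<bar> powr q)\<^sup>2)" if "1 \<le> i" for i
    unfolding square using moments(1)[OF that, of "2 * q"] q by simp
  show "expectation (\<lambda>x. \<bar>g i x\<bar> powr q) = normal_abs_moment \<sigma> q" if "1 \<le> i" for i
    using moments(2)[OF that q] .
  show "expectation (\<lambda>x. (\<bar>g i x\<bar> powr q)\<^sup>2) = normal_abs_moment \<sigma> (2 * q)" if "1 \<le> i" for i
    unfolding square using moments(2)[OF that, of "2 * q"] q by simp
qed simp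

lemma AE_lq_norm_limit:
  assumes q: "q > 0"
  shows "AE x in M. (\<lambda>d. lq_norm q d (\<lambda>i. g i x) / real d powr (1 / q)) \<longlonglongrightarrow> normal_abs_moment \<sigma> q powr (1 / q)"
  using AE_averages_abs_powr[OF q]
proof eventually_elim
  case (elim x)
  have "lq_norm q d (\<lambda>i. g i x) / real d powr (1 / q) = ((\<Sum>i=1..d. \<bar>g i x\<bar> powr q) / real d) powr (1 / q)" for d
    unfolding lq_norm_def by (simp add: powr_divide sum_nonneg)
  moreover have "(\<lambda>d. ((\<Sum>i=1..d. \<bar>g i x\<bar> powr q) / real d) powr (1 / q)) \<longlonglongrightarrow> normal_abs_moment \<sigma> q powr (1 / q)"
    using normal_abs_moment_pos[OF sigma_pos q] by (intro tendsto_powr elim tendsto_const) auto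
  ultimately show ?case
    by simp
qed

lemma AE_l2_norm_limit:
  "AE x in M. (\<lambda>d. lq_norm 2 d (\<lambda>i. g i x) / sqrt (real d)) \<longlonglongrightarrow> \<sigma>"
  using AE_lq_norm_limit[of 2] sigma_pos
  by (simp add: normal_abs_moment_two powr_half_sqrt)

lemma AE_eventually_l2_norm_pos:
  "AE x in M. eventually (\<lambda>d. lq_norm 2 d (\<lambda>i. g i x) > 0 \<and> 1 \<le> d) sequentially"
  using AE_l2_norm_limit
proof eventually_elim
  case (elim x)
  have "eventually (\<lambda>d. lq_norm 2 d (\<lambda>i. g i x) / sqrt (real d) > 0) sequentially"
    using order_tendstoD(1)[OF elim sigma_pos] .
  then show ?case
    using eventually_ge_at_top[of 1] by eventually_elim (auto simp: zero_less_divide_iff)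
qed

lemma AE_lq_ratio_unit_dir_limit:
  assumes q: "q > 0"
  shows "AE x in M. (\<lambda>d. lq_norm q d (unit_dir d (\<lambda>i. g i x)) / lq_norm 2 d (unit_dir d (\<lambda>i. g i x))
      * sqrt (real d) / real d powr (1 / q)) \<longlonglongrightarrow> normal_abs_moment \<sigma> q powr (1 / q) / \<sigma>"
  using AE_lq_norm_limit[OF q] AE_l2_norm_limit AE_eventually_l2_norm_pos
proof eventually_elim
  case (elim x)
  have "(\<lambda>d. (lq_norm q d (\<lambda>i. g i x) / real d powr (1 / q)) / (lq_norm 2 d (\<lambda>i. g i x) / sqrt (real d)))
      \<longlonglongrightarrow> normal_abs_moment \<sigma> q powr (1 / q) / \<sigma>"
    using elim(1,2) sigma_pos by (intro tendsto_divide) auto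
  moreover have "eventually (\<lambda>d. (lq_norm q d (\<lambda>i. g i x) / real d powr (1 / q)) / (lq_norm 2 d (\<lambda>i. g i x) / sqrt (real d)) =
      lq_norm q d (unit_dir d (\<lambda>i. g i x)) / lq_norm 2 d (unit_dir d (\<lambda>i. g i x)) * sqrt (real d) / real d powr (1 / q)) sequentially"
    using elim(3) by eventually_elim (simp add: lq_norm_ratio_unit_dir q)
  ultimately show ?case
    by (rule Lim_transform_eventually)
qed

lemma AE_eventually_ex_abs_normal_ge:
  assumes e: "0 < e" "e < 1"
  shows "AE x in M. eventually (\<lambda>d. \<exists>i\<in>{1..d}. (1 - e) * (\<sigma> * sqrt (2 * ln (real d))) \<le> \<bar>g i x\<bar>) sequentially"
proof -
  define b where "b = (\<lambda>d::nat. (1 - e) * (\<sigma> * sqrt (2 * ln (real d))))"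
  define c where "c = (\<lambda>d::nat. exp (- (((1 - e) * sqrt (2 * ln (real d)) + 1)\<^sup>2) / 2) / sqrt (2 * pi))"
  define A where "A = (\<lambda>d. \<Inter>i\<in>{1..d}. g i -` {y. \<bar>y\<bar> < b d} \<inter> space M)"
  have measurable_g: "g i \<in> borel_measurable M" if "1 \<le> i" for i
    using distributed_measurable[OF normal[OF that]] by simp
  have A: "{x \<in> space M. 2 \<le> d \<and> x \<in> A d} = A d" if "2 \<le> d" for d
    using that by (auto simp: A_def)
  have tail: "c d \<le> prob {x \<in> space M. b d \<le> \<bar>g i x\<bar>}" if "1 \<le> d" "1 \<le> i" for d i
  proof -
    have "(b d + \<sigma>)\<^sup>2 = \<sigma>\<^sup>2 * ((1 - e) * sqrt (2 * ln (real d)) + 1)\<^sup>2"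
      by (simp add: b_def power2_eq_square algebra_simps)
    then have "\<sigma> * normal_density 0 \<sigma> (b d + \<sigma>) = c d"
      using sigma_pos by (simp add: normal_density_def c_def real_sqrt_mult)
    moreover have "0 \<le> b d"
      using e sigma_pos that(1) by (simp add: b_def)
    ultimately show ?thesis
      using prob_abs_normal_ge_ge[OF normal[OF that(2)] sigma_pos] by metis
  qed
  have "eventually (\<lambda>d. prob {x \<in> space M. 2 \<le> d \<and> x \<in> A d} \<le> inverse (real d ^ 2)) sequentially"
    using eventually_two_ln_le_gaussian_lower[OF e] eventually_ge_at_top[of 2]
  proof eventually_elim
    case (elim d)
    have "prob {x \<in> space M. 2 \<le> d \<and> x \<in> A d} = prob (A d)"
      using A[OF elim(2)] by simp
    also have "\<dots> \<le> exp (- (real d * c d))"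
      unfolding A_def using elim(2) tail[of d] by (intro prob_all_abs_less_le_exp[OF indep]) auto
    also have "\<dots> \<le> exp (- (2 * ln (real d)))"
      using elim(1) by (simp add: c_def)
    also have "\<dots> = inverse (real d ^ 2)"
      using elim(2) exp_of_nat_mult[of 2 "ln (real d)"] by (simp add: exp_minus)
    finally show ?case .
  qed
  then obtain N where "\<And>d. N \<le> d \<Longrightarrow> prob {x \<in> space M. 2 \<le> d \<and> x \<in> A d} \<le> inverse (real d ^ 2)"
    unfolding eventually_sequentially by blast
  then have "summable (\<lambda>d. prob {x \<in> space M. 2 \<le> d \<and> x \<in> A d})"
    by (intro summable_comparison_test'[OF inverse_power_summable[of 2], of N]) auto
  then have "AE x in M. eventually (\<lambda>d. \<not> (2 \<le> d \<and> x \<in> A d)) sequentially"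
  proof (rule AE_eventually_not_of_summable_prob[rotated])
    show "{x \<in> space M. 2 \<le> d \<and> x \<in> A d} \<in> events" for d
    proof (cases "2 \<le> d")
      case True
      then have "{x \<in> space M. 2 \<le> d \<and> x \<in> A d} = A d"
        by (rule A)
      also have "\<dots> \<in> events"
        unfolding A_def using True measurable_g by (intro sets.finite_INT) auto
      finally show ?thesis .
    qed simp
  qed
  then show ?thesis
  proof (rule AE_mp[OF _ AE_I2[OF impI]])
    fix x assume x: "x \<in> space M" and ev: "eventually (\<lambda>d. \<not> (2 \<le> d \<and> x \<in> A d)) sequentially"
    show "eventually (\<lambda>d. \<exists>i\<in>{1..d}. (1 - e) * (\<sigma> * sqrt (2 * ln (real d))) \<le> \<bar>g i x\<bar>) sequentially"
      using ev eventually_ge_at_top[of 2] by eventually_elim (use x in \<open>auto simp: A_def b_def not_less\<close>)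
  qed
qed

lemma AE_Max_abs_limit:
  "AE x in M. (\<lambda>d. Max ((\<lambda>i. \<bar>g i x\<bar>) ` {1..d}) / (\<sigma> * sqrt (2 * ln (real d)))) \<longlonglongrightarrow> 1"
proof -
  define a where "a d = \<sigma> * sqrt (2 * ln (real d))" for d :: nat
  have "ln (real m) \<le> ln (real n)" if "m \<le> n" for m n :: nat
    using that by (cases "m = 0"; cases "n = 0") auto
  then have a: "mono a" "filterlim a at_top sequentially"
    unfolding a_def using sigma_pos by (auto intro!: monoI mult_left_mono) real_asymp
  have upper: "AE x in M. \<forall>j. eventually (\<lambda>d. \<bar>g d x\<bar> < (1 + 1 / real (Suc j)) * a d) sequentially"
    unfolding AE_all_countable a_def using sigma_pos normal
    by (intro allI AE_eventually_abs_normal_less) auto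
  have lower: "AE x in M. \<forall>j. eventually (\<lambda>d. \<exists>i\<in>{1..d}. (1 - 1 / real (Suc (Suc j))) * a d \<le> \<bar>g i x\<bar>) sequentially"
    unfolding AE_all_countable a_def by (intro allI AE_eventually_ex_abs_normal_ge) auto
  show ?thesis
    using upper lower
  proof eventually_elim
    case (elim x)
    show ?case
      unfolding a_def[symmetric]
    proof (rule tendsto_of_eventually_dist_le_inverse_Suc)
      fix j
      let ?\<epsilon> = "1 / real (Suc j)"
      have "eventually (\<lambda>d. \<bar>g d x\<bar> \<le> (1 + ?\<epsilon>) * a d) sequentially"
        using elim(1)[rule_format, of j] by (rule eventually_mono) simp
      then have "eventually (\<lambda>d. Max ((\<lambda>i. \<bar>g i x\<bar>) ` {1..d}) \<le> (1 + ?\<epsilon>) * a d) sequentially"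
        unfolding image_image[symmetric] using a by (intro eventually_Max_le_of_eventually_le) auto
      moreover have "eventually (\<lambda>d. 0 < a d) sequentially"
        using a(2) by (simp add: filterlim_at_top_dense)
      ultimately show "eventually (\<lambda>d. dist (Max ((\<lambda>i. \<bar>g i x\<bar>) ` {1..d}) / a d) 1 \<le> ?\<epsilon>) sequentially"
        using elim(2)[rule_format, of j] eventually_ge_at_top[of 1]
      proof eventually_elim
        case (elim d)
        obtain i where i: "i \<in> {1..d}" "(1 - 1 / real (Suc (Suc j))) * a d \<le> \<bar>g i x\<bar>"
          using elim(3) by blast
        have "(1 - ?\<epsilon>) * a d \<le> (1 - 1 / real (Suc (Suc j))) * a d"
          using elim(2) by (intro mult_right_mono) (auto simp: field_simps)
        also have "\<dots> \<le> Max ((\<lambda>i. \<bar>g i x\<bar>) ` {1..d})"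
          using i by (intro order_trans[OF i(2)] Max_ge) auto
        finally have "1 - ?\<epsilon> \<le> Max ((\<lambda>i. \<bar>g i x\<bar>) ` {1..d}) / a d"
          using elim(2) by (simp add: pos_le_divide_eq)
        moreover have "Max ((\<lambda>i. \<bar>g i x\<bar>) ` {1..d}) / a d \<le> 1 + ?\<epsilon>"
          using elim(1,2) by (simp add: pos_divide_le_eq)
        ultimately show ?case
          by (simp add: dist_real_def abs_le_iff)
      qed
    qed
  qed
qed

lemma AE_linf_ratio_unit_dir_limit:
  "AE x in M. (\<lambda>d. real d * (linf_norm d (unit_dir d (\<lambda>i. g i x)) / lq_norm 2 d (unit_dir d (\<lambda>i. g i x)))
      / sqrt (2 * real d * ln (real d))) \<longlonglongrightarrow> 1"
  using AE_Max_abs_limit AE_l2_norm_limit AE_eventually_l2_norm_pos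
proof eventually_elim
  case (elim x)
  have "(\<lambda>d. Max ((\<lambda>i. \<bar>g i x\<bar>) ` {1..d}) / (\<sigma> * sqrt (2 * ln (real d))) *
      (\<sigma> / (lq_norm 2 d (\<lambda>i. g i x) / sqrt (real d)))) \<longlonglongrightarrow> 1 * (\<sigma> / \<sigma>)"
    using elim(1,2) sigma_pos by (intro tendsto_intros) auto
  moreover have "eventually (\<lambda>d. Max ((\<lambda>i. \<bar>g i x\<bar>) ` {1..d}) / (\<sigma> * sqrt (2 * ln (real d))) *
      (\<sigma> / (lq_norm 2 d (\<lambda>i. g i x) / sqrt (real d))) =
      real d * (linf_norm d (unit_dir d (\<lambda>i. g i x)) / lq_norm 2 d (unit_dir d (\<lambda>i. g i x)))
        / sqrt (2 * real d * ln (real d))) sequentially"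
    using elim(3) eventually_ge_at_top[of 2]
  proof eventually_elim
    case (elim d)
    define t where "t = sqrt (real d)"
    define w where "w = sqrt (2 * ln (real d))"
    define c where "c = lq_norm 2 d (\<lambda>i. g i x)"
    define m where "m = Max ((\<lambda>i. \<bar>g i x\<bar>) ` {1..d})"
    have pos: "0 < t" "0 < w" "0 < c"
      using elim by (simp_all add: t_def w_def c_def)
    have "real d = t * t" "sqrt (2 * real d * ln (real d)) = t * w"
      by (simp_all add: t_def w_def real_sqrt_mult[symmetric] mult_ac)
    moreover have "linf_norm d (unit_dir d (\<lambda>i. g i x)) / lq_norm 2 d (unit_dir d (\<lambda>i. g i x)) = m / c"
      using linf_norm_ratio_unit_dir[of d "\<lambda>i. g i x"] elim by (simp add: linf_norm_def m_def c_def)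
    moreover have "m / (\<sigma> * w) * (\<sigma> / (c / t)) = (t * t) * (m / c) / (t * w)"
      using pos sigma_pos by (simp add: field_simps)
    ultimately show ?case
      unfolding t_def[symmetric] w_def[symmetric] c_def[symmetric] m_def[symmetric] by simp
  qed
  ultimately show ?case
    using sigma_pos by (simp add: Lim_transform_eventually)
qed

lemma AE_dual_lq_ratio_unit_dir_limit:
  assumes p: "p > 1"
  shows "AE x in M. (\<lambda>d. real d powr (1 / p) *
      (lq_norm (p / (p - 1)) d (unit_dir d (\<lambda>i. g i x)) / lq_norm 2 d (unit_dir d (\<lambda>i. g i x)))
      / sqrt (real d)) \<longlonglongrightarrow> sqrt 2 * (Gamma ((2 * p - 1) / (2 * (p - 1))) / sqrt pi) powr (1 - 1 / p)"
proof -
  define q where "q = p / (p - 1)"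
  have q: "q > 0" "1 / q = 1 - 1 / p" "(q + 1) / 2 = (2 * p - 1) / (2 * (p - 1))"
    using p by (simp_all add: q_def field_simps)
  have limit: "normal_abs_moment \<sigma> q powr (1 / q) / \<sigma> = sqrt 2 * (Gamma ((2 * p - 1) / (2 * (p - 1))) / sqrt pi) powr (1 - 1 / p)"
    using normal_abs_moment_root[OF sigma_pos q(1)] q(2,3) by simp
  have conjugate: "R * sqrt (real d) / real d powr (1 / q) = real d powr (1 / p) * R / sqrt (real d)"
    if "d > 0" for d :: nat and R :: real
  proof -
    have "real d powr (1 / p) * real d powr (1 / q) = sqrt (real d) * sqrt (real d)"
      using that q(2) by (simp flip: powr_add)
    then show ?thesis
      using that by (simp add: field_simps)
  qed
  show ?thesis
    unfolding q_def[symmetric] limit[symmetric]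
    using AE_lq_ratio_unit_dir_limit[OF q(1)]
  proof eventually_elim
    case (elim x)
    then show ?case
      using eventually_gt_at_top[of 0] by (rule Lim_transform_eventually[OF _ eventually_mono]) (rule conjugate)
  qed
qed

lemma AE_l1_ratio_unit_dir_limit:
  "AE x in M. (\<lambda>d. (lq_norm 1 d (unit_dir d (\<lambda>i. g i x)) / lq_norm 2 d (unit_dir d (\<lambda>i. g i x)))
      / sqrt (real d)) \<longlonglongrightarrow> sqrt 2 * Gamma 1 / sqrt pi"
proof -
  have limit: "normal_abs_moment \<sigma> 1 powr (1 / 1) / \<sigma> = sqrt 2 * Gamma 1 / sqrt pi"
    using normal_abs_moment_root[OF sigma_pos zero_less_one] by simp
  have normalize: "R * sqrt (real d) / real d powr (1 / 1) = R / sqrt (real d)" if "d > 0" for d :: nat and R :: real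
    using that by (simp add: field_simps)
  show ?thesis
    unfolding limit[symmetric] using AE_lq_ratio_unit_dir_limit[OF zero_less_one]
  proof eventually_elim
    case (elim x)
    then show ?case
      using eventually_gt_at_top[of 0] by (rule Lim_transform_eventually[OF _ eventually_mono]) (rule normalize)
  qed
qed

end

theorem proposition1:
  fixes M :: "'a measure" and g :: "nat \<Rightarrow> 'a \<Rightarrow> real" and \<sigma> :: real
  assumes "prob_space M"
    and "\<sigma> > 0"
    and "prob_space.indep_vars M (\<lambda>_. borel) g {1..}"
    and "\<And>i. i \<ge> 1 \<Longrightarrow> distributed M lborel (g i) (normal_density 0 \<sigma>)"
  shows
    "(\<forall>p::real. p > 1 \<longrightarrow>
       (let p' = p / (p - 1) in
        AE \<omega> in M. ((\<lambda>d. real d powr (1 / p) *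
              (lq_norm p' d (unit_dir d (\<lambda>i. g i \<omega>)) / lq_norm 2 d (unit_dir d (\<lambda>i. g i \<omega>)))
              / sqrt (real d))
          \<longlonglongrightarrow> sqrt 2 * (Gamma ((2 * p - 1) / (2 * (p - 1))) / sqrt pi) powr (1 - 1 / p))))
   \<and> (AE \<omega> in M. ((\<lambda>d. (lq_norm 1 d (unit_dir d (\<lambda>i. g i \<omega>)) / lq_norm 2 d (unit_dir d (\<lambda>i. g i \<omega>)))
              / sqrt (real d))
          \<longlonglongrightarrow> sqrt 2 * Gamma 1 / sqrt pi))
   \<and> (AE \<omega> in M. ((\<lambda>d. real d * (linf_norm d (unit_dir d (\<lambda>i. g i \<omega>)) / lq_norm 2 d (unit_dir d (\<lambda>i. g i \<omega>)))
              / sqrt (2 * real d * ln (real d)))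
          \<longlonglongrightarrow> 1))"
proof -
  interpret centered_normal_sequence M g \<sigma>
    using assms by (simp add: centered_normal_sequence_def centered_normal_sequence_axioms_def)
  show ?thesis
    using AE_dual_lq_ratio_unit_dir_limit AE_l1_ratio_unit_dir_limit AE_linf_ratio_unit_dir_limit
    by (simp add: Let_def)
qed

end
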